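(* Let $m$ and $k$ be positive integers with $m\le k-2$. Let $G$ be an inflator graph of order $k$ with drop $m$ and distinguished vertex set $\{a,b\}$. Let $H$ be the graph obtained from $G$ by adding a new vertex $x$ and the two edges $ax$ and $bx$. Then $H$ is nonhamiltonian and homogeneously traceable.
   Context: All graphs are finite and simple; the order of a path is its number of vertices. For vertices $u,v$ of $G$, $\tau_G(u,v)$ is the order of a longest path in $G$ with endvertices $u$ and $v$. Let $G$ be a graph of order $k\ge 3$ and $m\le k-2$ a positive integer. $G$ is an inflator graph with drop $m$ if it has two distinguished vertices $a,b$ such that: (D-1) $\tau_G(a,b)=k-m$; (D-2) each distinguished vertex is an endvertex of a path in $G$ containing all vertices of $G$ except the other distinguished vertex; (D-3) $G$ has a hamiltonian path starting at each distinguished vertex; (D-4) for every $v\in V(G)\setminus\{a,b\}$ there are a path $P$ from $v$ to one distinguished vertex and a path $Q$ having the other distinguished vertex as an endvertex (possibly $Q$ is that single vertex) such that $V(P)\cap V(Q)=\emptyset$ and $V(P)\cup V(Q)=V(G)$. A graph is homogeneously traceable if every vertex is an endvertex of a hamiltonian path; it is nonhamiltonian if it has no hamiltonian cycle. *)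

theory Defs
  imports Main
begin

definition simple_graph :: "'a set \<Rightarrow> ('a \<Rightarrow> 'a \<Rightarrow> bool) \<Rightarrow> bool" where
  "simple_graph V E \<longleftrightarrow> finite V \<and> (\<forall>u w. E u w \<longrightarrow> E w u)
     \<and> (\<forall>u. \<not> E u u) \<and> (\<forall>u w. E u w \<longrightarrow> u \<in> V \<and> w \<in> V)"

definition is_path :: "'a set \<Rightarrow> ('a \<Rightarrow> 'a \<Rightarrow> bool) \<Rightarrow> 'a list \<Rightarrow> bool" where
  "is_path V E p \<longleftrightarrow> p \<noteq> [] \<and> distinct p \<and> set p \<subseteq> V
     \<and> (\<forall>i. Suc i < length p \<longrightarrow> E (p ! i) (p ! Suc i))"

definition endvertex :: "'a \<Rightarrow> 'a list \<Rightarrow> bool" where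
  "endvertex u p \<longleftrightarrow> hd p = u \<or> last p = u"

definition tau :: "'a set \<Rightarrow> ('a \<Rightarrow> 'a \<Rightarrow> bool) \<Rightarrow> 'a \<Rightarrow> 'a \<Rightarrow> nat" where
  "tau V E u v = Max {length p | p. is_path V E p \<and> hd p = u \<and> last p = v}"

definition ham_path :: "'a set \<Rightarrow> ('a \<Rightarrow> 'a \<Rightarrow> bool) \<Rightarrow> 'a list \<Rightarrow> bool" where
  "ham_path V E p \<longleftrightarrow> is_path V E p \<and> set p = V"

definition hamiltonian :: "'a set \<Rightarrow> ('a \<Rightarrow> 'a \<Rightarrow> bool) \<Rightarrow> bool" where
  "hamiltonian V E \<longleftrightarrow> (\<exists>p. ham_path V E p \<and> length p \<ge> 3 \<and> E (last p) (hd p))"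

definition homogeneously_traceable :: "'a set \<Rightarrow> ('a \<Rightarrow> 'a \<Rightarrow> bool) \<Rightarrow> bool" where
  "homogeneously_traceable V E \<longleftrightarrow> (\<forall>v\<in>V. \<exists>p. ham_path V E p \<and> endvertex v p)"

definition inflator_graph :: "'a set \<Rightarrow> ('a \<Rightarrow> 'a \<Rightarrow> bool) \<Rightarrow> nat \<Rightarrow> nat \<Rightarrow> 'a \<Rightarrow> 'a \<Rightarrow> bool" where
  "inflator_graph V E k m a b \<longleftrightarrow>
     simple_graph V E \<and> card V = k \<and> k \<ge> 3 \<and> 0 < m \<and> m \<le> k - 2 \<and>
     a \<in> V \<and> b \<in> V \<and> a \<noteq> b \<and>
     \<comment> \<open>(D-1)\<close>
     tau V E a b = k - m \<and>
     \<comment> \<open>(D-2)\<close>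
     (\<exists>p. is_path V E p \<and> endvertex a p \<and> set p = V - {b}) \<and>
     (\<exists>p. is_path V E p \<and> endvertex b p \<and> set p = V - {a}) \<and>
     \<comment> \<open>(D-3)\<close>
     (\<exists>p. ham_path V E p \<and> hd p = a) \<and>
     (\<exists>p. ham_path V E p \<and> hd p = b) \<and>
     \<comment> \<open>(D-4)\<close>
     (\<forall>v \<in> V - {a, b}. \<exists>P Q. is_path V E P \<and> is_path V E Q \<and> hd P = v \<and>
        ((last P = a \<and> endvertex b Q) \<or> (last P = b \<and> endvertex a Q)) \<and>
        set P \<inter> set Q = {} \<and> set P \<union> set Q = V)"

definition add_vertex_edges :: "('a \<Rightarrow> 'a \<Rightarrow> bool) \<Rightarrow> 'a \<Rightarrow> 'a \<Rightarrow> 'a \<Rightarrow> 'a \<Rightarrow> 'a \<Rightarrow> bool" where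
  "add_vertex_edges E x a b u w \<longleftrightarrow> E u w \<or> (u = x \<and> (w = a \<or> w = b)) \<or> (w = x \<and> (u = a \<or> u = b))"

end

theory Submission
  imports Defs
begin

(* The new vertex x has exactly the neighbours a and b. Hence a hamiltonian cycle of H runs
   a, x, b, and deleting x leaves a hamiltonian a-b path of G, of order k > k - m = tau(a, b).
   Conversely, gluing two disjoint paths of G through x (entering from one distinguished vertex
   and leaving to the other) gives a hamiltonian path of H; (D-3) supplies one ending at x,
   (D-2) ones ending at a and at b, and (D-4) one ending at any other vertex. *)

lemma is_path_Cons:
  "is_path V E (u # p) \<longleftrightarrow> u \<in> V \<and> u \<notin> set p \<and> (p = [] \<or> is_path V E p \<and> E u (hd p))"
proof -
  have "(\<forall>i. Suc i < length (u # p) \<longrightarrow> E ((u # p) ! i) ((u # p) ! Suc i)) \<longleftrightarrow>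
        (p \<noteq> [] \<longrightarrow> E u (hd p)) \<and> (\<forall>i. Suc i < length p \<longrightarrow> E (p ! i) (p ! Suc i))"
    by (cases p) (auto simp: All_less_Suc2 less_Suc_eq_0_disj)
  then show ?thesis
    unfolding is_path_def by auto
qed

lemma is_path_append:
  "is_path V E (p @ q) \<longleftrightarrow> (p = [] \<and> is_path V E q) \<or> (q = [] \<and> is_path V E p) \<or>
     (is_path V E p \<and> is_path V E q \<and> set p \<inter> set q = {} \<and> E (last p) (hd q))"
proof (induction p)
  case Nil
  show ?case by (auto simp: is_path_def)
next
  case (Cons u p)
  then show ?case by (cases p) (auto simp: is_path_Cons)
qed

lemma is_path_rev:
  assumes "symp E" "is_path V E p"
  shows "is_path V E (rev p)"
  using assms(2)
proof (induction p)
  case Nil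
  then show ?case by (simp add: is_path_def)
next
  case (Cons u p)
  then show ?case using assms(1)
    by (auto simp: is_path_append is_path_Cons last_rev dest: sympD)
qed

lemma is_path_orient_hd:
  assumes "symp E" "is_path V E p" "endvertex u p"
  obtains q where "is_path V E q" "set q = set p" "hd q = u"
  using assms is_path_rev[OF assms(1,2)] unfolding endvertex_def
  by (metis hd_rev set_rev)

lemma is_path_orient_last:
  assumes "symp E" "is_path V E p" "endvertex u p"
  obtains q where "is_path V E q" "set q = set p" "last q = u"
  using assms is_path_rev[OF assms(1,2)] unfolding endvertex_def
  by (metis last_rev set_rev)

lemma length_le_tau:
  assumes "finite V" "is_path V E p" "hd p = u" "last p = v"
  shows "length p \<le> tau V E u v"
proof -
  have "{p. is_path V E p \<and> hd p = u \<and> last p = v} \<subseteq> {xs. set xs \<subseteq> V \<and> length xs \<le> card V}"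
    using assms(1) by (auto simp: is_path_def intro: card_mono dest!: distinct_card[symmetric])
  then have "finite {p. is_path V E p \<and> hd p = u \<and> last p = v}"
    using finite_lists_length_le[OF assms(1)] finite_subset by blast
  then show ?thesis
    unfolding tau_def using assms by (intro Max_ge) (auto simp: setcompr_eq_image)
qed

lemma is_path_cycle_rotate:
  assumes "is_path V E p" "E (last p) (hd p)" "x \<in> set p"
  obtains q where "is_path V E (x # q)" "set (x # q) = set p" "q \<noteq> [] \<Longrightarrow> E (last q) x"
proof -
  obtain l r where p: "p = l @ x # r"
    using split_list[OF assms(3)] by blast
  have xr: "is_path V E (x # r)" and l: "l \<noteq> [] \<Longrightarrow> is_path V E l \<and> E (last l) x"
    and disj: "set l \<inter> set (x # r) = {}"
    using assms(1) unfolding p is_path_append by auto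
  have "is_path V E ((x # r) @ l)"
  proof (cases "l = []")
    case False
    then have "E (last (x # r)) (hd l)"
      using assms(2) by (simp add: p)
    with False show ?thesis
      using xr l disj unfolding is_path_append by blast
  qed (use xr in simp)
  moreover have "E (last (r @ l)) x" if "r @ l \<noteq> []"
  proof (cases "l = []")
    case True
    then show ?thesis
      using that assms(2) by (simp add: p)
  qed (use l in simp)
  moreover have "set (x # r @ l) = set p"
    by (auto simp: p)
  ultimately show thesis
    using that[of "r @ l"] by simp
qed

lemma is_path_add_vertex_edges:
  "is_path V E q \<Longrightarrow> is_path (insert x V) (add_vertex_edges E x a b) q"
  unfolding is_path_def add_vertex_edges_def by auto

lemma is_path_add_vertex_edgesD:
  assumes "is_path (insert x V) (add_vertex_edges E x a b) q" "x \<notin> set q"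
  shows "is_path V E q"
  using assms unfolding is_path_def add_vertex_edges_def by (auto dest: nth_mem)

lemma add_vertex_edges_new_vertex:
  assumes "simple_graph V E" "x \<notin> V"
  shows "add_vertex_edges E x a b x w \<longleftrightarrow> w = a \<or> w = b"
    and "add_vertex_edges E x a b w x \<longleftrightarrow> w = a \<or> w = b"
  using assms unfolding simple_graph_def add_vertex_edges_def by auto

lemma add_vertex_edges_new_edges:
  "add_vertex_edges E x a b x a" "add_vertex_edges E x a b x b"
  "add_vertex_edges E x a b a x" "add_vertex_edges E x a b b x"
  by (simp_all add: add_vertex_edges_def)

lemma hamiltonian_add_vertex_edges_spanning_path:
  assumes G: "simple_graph V E" and x: "x \<notin> V"
    and "hamiltonian (insert x V) (add_vertex_edges E x a b)"
  obtains q where "is_path V E q" "set q = V" "hd q = a" "last q = b"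
proof -
  let ?E = "add_vertex_edges E x a b"
  obtain p where p: "is_path (insert x V) ?E p" "set p = insert x V" "length p \<ge> 3"
    and closed: "?E (last p) (hd p)"
    using assms(3) unfolding hamiltonian_def ham_path_def by blast
  obtain q where xq: "is_path (insert x V) ?E (x # q)" "set (x # q) = set p"
    and closing: "q \<noteq> [] \<Longrightarrow> ?E (last q) x"
    using is_path_cycle_rotate[OF p(1) closed] p(2) by blast
  have "length (x # q) = length p"
    using xq p(1) distinct_card unfolding is_path_def by metis
  then have "length q \<ge> 2"
    using p(3) by simp
  then have "q \<noteq> []" "x \<notin> set q" "distinct q"
    using xq(1) by (auto simp: is_path_def)
  then have q: "is_path V E q" "set q = V"
    using xq p(2) x is_path_add_vertex_edgesD by (auto simp: is_path_Cons insert_ident)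
  have "hd q \<in> {a, b}" "last q \<in> {a, b}"
    using xq(1) closing \<open>q \<noteq> []\<close> add_vertex_edges_new_vertex[OF G x]
    by (auto simp: is_path_Cons)
  moreover have "hd q \<noteq> last q"
    using \<open>distinct q\<close> \<open>length q \<ge> 2\<close> by (cases q) auto
  ultimately consider "hd q = a" "last q = b" | "hd q = b" "last q = a"
    by (metis insert_iff singletonD)
  then show thesis
  proof cases
    case 2
    have "symp E"
      using G by (simp add: simple_graph_def symp_def)
    then show thesis
      using that[OF is_path_rev[OF _ q(1)]] 2 q(2) by (simp add: hd_rev last_rev)
  qed (use q that in blast)
qed

lemma ham_path_add_vertex_edges_through:
  assumes x: "x \<notin> V" and PQ: "set P \<inter> set Q = {}" "set P \<union> set Q = V"
    and P: "P \<noteq> [] \<Longrightarrow> is_path V E P \<and> (last P = a \<or> last P = b)"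
    and Q: "Q \<noteq> [] \<Longrightarrow> is_path V E Q \<and> (hd Q = a \<or> hd Q = b)"
  shows "ham_path (insert x V) (add_vertex_edges E x a b) (P @ x # Q)"
proof -
  let ?E = "add_vertex_edges E x a b"
  have "Q = [] \<or> is_path (insert x V) ?E Q \<and> ?E x (hd Q)"
    using Q add_vertex_edges_new_edges by (auto intro: is_path_add_vertex_edges)
  moreover have "x \<notin> set Q"
    using PQ(2) x by blast
  ultimately have xQ: "is_path (insert x V) ?E (x # Q)"
    unfolding is_path_Cons by blast
  have "is_path (insert x V) ?E (P @ x # Q)"
  proof (cases "P = []")
    case False
    then have "is_path (insert x V) ?E P" "?E (last P) x"
      using P add_vertex_edges_new_edges by (auto intro: is_path_add_vertex_edges)
    moreover have "set P \<inter> set (x # Q) = {}"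
      using PQ x by auto
    ultimately show ?thesis
      using xQ by (simp add: is_path_append)
  qed (use xQ in simp)
  then show ?thesis
    using PQ(2) by (auto simp: ham_path_def)
qed

lemma inflator_graph_add_vertex_edges_homogeneously_traceable:
  assumes G: "inflator_graph V E k m a b" and x: "x \<notin> V"
  shows "homogeneously_traceable (insert x V) (add_vertex_edges E x a b)"
  unfolding homogeneously_traceable_def
proof
  let ?E = "add_vertex_edges E x a b"
  fix v assume v: "v \<in> insert x V"
  note G' = G[unfolded inflator_graph_def]
  have "symp E" "a \<in> V" "b \<in> V"
    using G' by (simp_all add: simple_graph_def symp_def)
  have ends_at: "\<exists>p. ham_path (insert x V) ?E p \<and> endvertex u p"
    if p: "is_path V E p" "endvertex w p" "set p = V - {u}"
      and u: "u \<in> V" "{u, w} = {a, b}" for u w p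
  proof -
    obtain P where P: "is_path V E P" "set P = V - {u}" "last P = w"
      using is_path_orient_last[OF \<open>symp E\<close> p(1,2)] p(3) by metis
    have "ham_path (insert x V) ?E (P @ [x, u])"
      using ham_path_add_vertex_edges_through[OF x, of P "[u]"] P u
      by (auto simp: is_path_def doubleton_eq_iff)
    then show ?thesis
      by (auto simp: endvertex_def)
  qed
  consider "v = x" | "v = a" | "v = b" | "v \<in> V - {a, b}"
    using v by blast
  then show "\<exists>p. ham_path (insert x V) ?E p \<and> endvertex v p"
  proof cases
    case 1
    obtain p where "ham_path V E p" "hd p = a"
      using G' by blast
    then have "ham_path (insert x V) ?E (x # p)"
      using ham_path_add_vertex_edges_through[OF x, of "[]" p] by (auto simp: ham_path_def)
    then show ?thesis
      using 1 by (auto simp: endvertex_def)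
  next
    case 2
    obtain p where "is_path V E p" "endvertex b p" "set p = V - {a}"
      using G' by blast
    then show ?thesis
      using ends_at[of p b a] 2 \<open>a \<in> V\<close> by blast
  next
    case 3
    obtain p where "is_path V E p" "endvertex a p" "set p = V - {b}"
      using G' by blast
    then show ?thesis
      using ends_at[of p a b] 3 \<open>b \<in> V\<close> by blast
  next
    case 4
    then obtain P Q w where P: "is_path V E P" "hd P = v" "last P \<in> {a, b}"
      and Q: "is_path V E Q" "endvertex w Q" "w \<in> {a, b}"
      and PQ: "set P \<inter> set Q = {}" "set P \<union> set Q = V"
      using G' by blast
    obtain Q' where Q': "is_path V E Q'" "set Q' = set Q" "hd Q' = w"
      using is_path_orient_hd[OF \<open>symp E\<close> Q(1,2)] by blast
    have "ham_path (insert x V) ?E (P @ x # Q')"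
      using ham_path_add_vertex_edges_through[OF x, of P Q'] P Q Q' PQ by auto
    moreover have "P \<noteq> []"
      using P(1) by (simp add: is_path_def)
    ultimately show ?thesis
      using P(2) by (auto simp: endvertex_def)
  qed
qed

theorem theorem2p22:
  fixes V :: "'a set" and E :: "'a \<Rightarrow> 'a \<Rightarrow> bool" and k m :: nat and a b x :: 'a
  assumes "0 < m" and "0 < k" and "m \<le> k - 2"
    and "inflator_graph V E k m a b"
    and "x \<notin> V"
  shows "\<not> hamiltonian (insert x V) (add_vertex_edges E x a b)
       \<and> homogeneously_traceable (insert x V) (add_vertex_edges E x a b)"
proof
  have G: "simple_graph V E" "card V = k" "tau V E a b = k - m"
    using assms(4) unfolding inflator_graph_def by blast+
  show "\<not> hamiltonian (insert x V) (add_vertex_edges E x a b)"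
  proof
    assume "hamiltonian (insert x V) (add_vertex_edges E x a b)"
    then obtain q where q: "is_path V E q" "set q = V" "hd q = a" "last q = b"
      using hamiltonian_add_vertex_edges_spanning_path[OF G(1) assms(5)] by blast
    have "card V = length q"
      using q(1,2) distinct_card unfolding is_path_def by metis
    also have "\<dots> \<le> tau V E a b"
      using length_le_tau q G(1) by (metis simple_graph_def)
    finally show False
      using G(2,3) assms(1,2) by linarith
  qed
  show "homogeneously_traceable (insert x V) (add_vertex_edges E x a b)"
    using inflator_graph_add_vertex_edges_homogeneously_traceable[OF assms(4,5)] .
qed

end
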